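(* For every ALC game $G$, the algorithm ASF applied to $G$ terminates, and the game it returns is equivalent to $G$.
   Context: Linear clobber: Left owns black stones $\mathtt{x}$, Right owns white stones $\mathtt{o}$, on a path of cells each empty or holding a stone. A move: a player chooses one of their stones adjacent (consecutive on the path) to an opponent stone, removes the opponent stone and moves their own stone into that cell, emptying its original cell. Players alternate; whoever cannot move loses. A part is a maximal block of consecutive non-empty cells, written as a word over $\{\mathtt{o},\mathtt{x}\}$ (concatenation, exponents for repetition); a part and its reversal are identified; a position (game) is the disjoint sum (multiset) of its parts. For a part $p$, $-p$ swaps all colors. A part is trivial if no two adjacent stones differ in color. An ALC game is a finite sum of non-trivial parts each of which appears in some position reachable by legal moves from a single part $(\mathtt{ox})^n$, $n\ge 1$. Games $G,H$ are equivalent if for every game $X$, the sums $G+X$ and $H+X$ have the same outcome class (outcome class: which players have a winning strategy when moving first). Algorithm ASF: given a game (multiset of parts), repeatedly apply the first applicable rule in the preference order $\alpha,-\alpha,\beta,-\beta,\gamma,-\gamma,\delta,-\delta,\varepsilon,-\varepsilon,\zeta,-\zeta,\eta,-\eta$ until no rule applies, and return the result. Each rule replaces one part (matched up to reversal) by the listed parts ("nothing" means the part is deleted): $\alpha$: each of $\mathtt{o},\mathtt{oo},\mathtt{ooo},\mathtt{ooxx},\mathtt{oxoxox}$ is replaced by nothing. $\beta$: if parts $p$ and $-p$ are both present, delete both. $\gamma$: each of $\mathtt{oxo},\mathtt{ooxox},\mathtt{ooxoxoo},\mathtt{xxoxoxx}$ is replaced by $\mathtt{ox}$. $\delta$: $\mathtt{oxoxoxoxo}$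 is replaced by $\mathtt{ooxo}$. $\varepsilon$: each of $\mathtt{ooxoxx}$, $\mathtt{oxoxoxoxoxox}$ is replaced by the two parts $\mathtt{oxox}$ and $\mathtt{ox}$. $\zeta$: $\mathtt{ooxoo}$ is replaced by $\mathtt{oox}$. $\eta$: $\mathtt{ooxo}$ is replaced by the two parts $\mathtt{xxo}$ and $\mathtt{ox}$. For a rule $\rho$, the rule $-\rho$ is obtained by replacing every part on both sides of $\rho$ by its negative (e.g. $-\alpha$ deletes each of $\mathtt{x},\mathtt{xx},\mathtt{xxx},\mathtt{xxoo},\mathtt{xoxoxo}$). *)

theory Defs
  imports Main "HOL-Library.Multiset"
begin

text \<open>Stones: Bk is a black stone x (Left), Wh is a white stone o (Right).
  A stone colour also denotes the player owning stones of that colour.\<close>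

datatype stone = Bk | Wh

fun opp :: "stone \<Rightarrow> stone" where
  "opp Bk = Wh" | "opp Wh = Bk"

type_synonym part = "stone list"
type_synonym game = "part multiset"

definition w :: "string \<Rightarrow> part" where
  "w s = map (\<lambda>ch. if ch = CHR ''x'' then Bk else Wh) s"

definition neg_part :: "part \<Rightarrow> part" where
  "neg_part p = map opp p"

definition valid_pos :: "game \<Rightarrow> bool" where
  "valid_pos G \<longleftrightarrow> (\<forall>q\<in>#G. q \<noteq> [])"

definition nontrivial :: "part \<Rightarrow> bool" where
  "nontrivial q \<longleftrightarrow> (\<exists>i. Suc i < length q \<and> q ! i \<noteq> q ! Suc i)"

text \<open>A stone c at cell i clobbers the opponent stone at cell i+1 or i-1; cell i becomes
  empty, which splits the part.\<close>
definition part_moves :: "stone \<Rightarrow> part \<Rightarrow> part list set" where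
  "part_moves c q =
     {[take i q, c # drop (i+2) q] | i. Suc i < length q \<and> q ! i = c \<and> q ! Suc i = opp c}
   \<union> {[take (i-1) q @ [c], drop (i+1) q] | i. 0 < i \<and> i < length q \<and> q ! i = c \<and> q ! (i-1) = opp c}"

definition move :: "stone \<Rightarrow> game \<Rightarrow> game \<Rightarrow> bool" where
  "move c G G' \<longleftrightarrow> (\<exists>q\<in>#G. \<exists>ps\<in>part_moves c q.
       G' = G - {#q#} + mset (filter (\<lambda>l. l \<noteq> []) ps))"

definition any_move :: "game \<Rightarrow> game \<Rightarrow> bool" where
  "any_move G G' \<longleftrightarrow> move Bk G G' \<or> move Wh G G'"

definition stones :: "game \<Rightarrow> nat" where
  "stones G = sum_mset (image_mset length G)"

text \<open>Every move removes one stone,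
  so depth stones G + 1 exceeds the length of every play and gives the exact value.\<close>
fun wins_fuel :: "nat \<Rightarrow> stone \<Rightarrow> game \<Rightarrow> bool" where
  "wins_fuel 0 c G = False"
| "wins_fuel (Suc k) c G = (\<exists>G'. move c G G' \<and> \<not> wins_fuel k (opp c) G')"

definition wins :: "stone \<Rightarrow> game \<Rightarrow> bool" where
  "wins c G = wins_fuel (Suc (stones G)) c G"

definition outcome :: "game \<Rightarrow> bool \<times> bool" where
  "outcome G = (wins Bk G, wins Wh G)"

definition equiv_game :: "game \<Rightarrow> game \<Rightarrow> bool" where
  "equiv_game G H \<longleftrightarrow> (\<forall>X. valid_pos X \<longrightarrow> outcome (G + X) = outcome (H + X))"

definition oxn :: "nat \<Rightarrow> part" where
  "oxn n = concat (replicate n [Wh, Bk])"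

definition alc_part :: "part \<Rightarrow> bool" where
  "alc_part q \<longleftrightarrow> (\<exists>n\<ge>1. \<exists>P. any_move\<^sup>*\<^sup>* {#oxn n#} P \<and> (q \<in># P \<or> rev q \<in># P))"

definition alc_game :: "game \<Rightarrow> bool" where
  "alc_game G \<longleftrightarrow> (\<forall>q\<in>#G. nontrivial q \<and> alc_part q)"

datatype rule = Simple "(part \<times> part list) list" | Beta

definition neg_rule :: "(part \<times> part list) list \<Rightarrow> (part \<times> part list) list" where
  "neg_rule R = map (\<lambda>(p, rs). (neg_part p, map neg_part rs)) R"

definition rho_alpha :: "(part \<times> part list) list" where
  "rho_alpha = [(w ''o'', []), (w ''oo'', []), (w ''ooo'', []), (w ''ooxx'', []), (w ''oxoxox'', [])]"
definition rho_gamma :: "(part \<times> part list) list" where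
  "rho_gamma = [(w ''oxo'', [w ''ox'']), (w ''ooxox'', [w ''ox'']), (w ''ooxoxoo'', [w ''ox'']),
                (w ''xxoxoxx'', [w ''ox''])]"
definition rho_delta :: "(part \<times> part list) list" where
  "rho_delta = [(w ''oxoxoxoxo'', [w ''ooxo''])]"
definition rho_eps :: "(part \<times> part list) list" where
  "rho_eps = [(w ''ooxoxx'', [w ''oxox'', w ''ox'']), (w ''oxoxoxoxoxox'', [w ''oxox'', w ''ox''])]"
definition rho_zeta :: "(part \<times> part list) list" where
  "rho_zeta = [(w ''ooxoo'', [w ''oox''])]"
definition rho_eta :: "(part \<times> part list) list" where
  "rho_eta = [(w ''ooxo'', [w ''xxo'', w ''ox''])]"

text \<open>Preference order alpha, -alpha, beta, -beta, gamma, -gamma, ..., eta, -eta.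
  (-beta coincides with beta.)\<close>
definition asf_rules :: "rule list" where
  "asf_rules = [Simple rho_alpha, Simple (neg_rule rho_alpha), Beta, Beta,
     Simple rho_gamma, Simple (neg_rule rho_gamma), Simple rho_delta, Simple (neg_rule rho_delta),
     Simple rho_eps, Simple (neg_rule rho_eps), Simple rho_zeta, Simple (neg_rule rho_zeta),
     Simple rho_eta, Simple (neg_rule rho_eta)]"

definition matches :: "part \<Rightarrow> part \<Rightarrow> bool" where
  "matches pat q \<longleftrightarrow> q = pat \<or> q = rev pat"

fun rule_step :: "rule \<Rightarrow> game \<Rightarrow> game \<Rightarrow> bool" where
  "rule_step (Simple R) G G' \<longleftrightarrow>
     (\<exists>(pat, rs)\<in>set R. \<exists>q\<in>#G. matches pat q \<and> G' = G - {#q#} + mset rs)"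
| "rule_step Beta G G' \<longleftrightarrow>
     (\<exists>q1 q2. {#q1, q2#} \<subseteq># G \<and> matches (neg_part q1) q2 \<and> G' = G - {#q1, q2#})"

definition applicable :: "rule \<Rightarrow> game \<Rightarrow> bool" where
  "applicable r G \<longleftrightarrow> (\<exists>G'. rule_step r G G')"

definition asf_step :: "game \<Rightarrow> game \<Rightarrow> bool" where
  "asf_step G G' \<longleftrightarrow> (\<exists>i<length asf_rules. applicable (asf_rules ! i) G \<and>
       (\<forall>j<i. \<not> applicable (asf_rules ! j) G) \<and> rule_step (asf_rules ! i) G G')"

end

(*
  Neither claim needs the hypothesis that G is an ALC game: both hold for every clobber position.

  Termination: every rule replaces a part by strictly shorter parts or deletes parts, so the
  multiset of part lengths decreases in the well-founded multiset ordering.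

  Equivalence: if G + (-H) is a second-player win, then G and H are equivalent, because adding a
  second-player win never changes who wins moving first, and H + (-H) is a second-player win by the
  mirror strategy. The mirror strategy also justifies rule beta and the identification of a part
  with its reversal. For each of the other rules p => rs, that p + (-rs) is a second-player win is
  decided by an exhaustive search of its game tree, verified once and then evaluated symbolically;
  the search keeps positions small by dropping parts without moves and cancelling opposite parts.
*)
theory Submission
  imports Defs
begin

lemma opp_opp [simp]: "opp (opp c) = c"
  by (cases c) simp_all

lemma stones_add [simp]: "stones (A + B) = stones A + stones B"
  by (simp add: stones_def)

lemma stones_move: "move c G G' \<Longrightarrow> stones G = Suc (stones G')"
proof -
  assume "move c G G'"
  then obtain q ps where q: "q \<in># G" and ps: "ps \<in> part_moves c q"
    and G': "G' = G - {#q#} + mset (filter (\<lambda>l. l \<noteq> []) ps)"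
    unfolding move_def by blast
  have "sum_list (map length ps) + 1 = length q"
    using ps unfolding part_moves_def by auto
  moreover have "stones (mset (filter (\<lambda>l. l \<noteq> []) ps)) = sum_list (map length ps)"
    unfolding stones_def by (induction ps) auto
  moreover have "stones G = length q + stones (G - {#q#})"
    using q by (metis add_mset_remove_trivial_If stones_def image_mset_add_mset sum_mset.insert)
  ultimately show ?thesis using G' by simp
qed

lemma wins_iff_move: "wins c G \<longleftrightarrow> (\<exists>G'. move c G G' \<and> \<not> wins (opp c) G')"
proof -
  have "wins_fuel (stones G) (opp c) G' = wins (opp c) G'" if "move c G G'" for G'
    using stones_move[OF that] by (simp add: wins_def)
  then show ?thesis
    unfolding wins_def by auto
qed

lemma move_add_left: "move c A A' \<Longrightarrow> move c (A + B) (A' + B)"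
proof -
  assume "move c A A'"
  then obtain q ps where q: "q \<in># A" and ps: "ps \<in> part_moves c q"
    and A': "A' = A - {#q#} + mset (filter (\<lambda>l. l \<noteq> []) ps)"
    unfolding move_def by blast
  have "A' + B = A + B - {#q#} + mset (filter (\<lambda>l. l \<noteq> []) ps)"
    using A' q by (simp add: diff_union_single_conv ac_simps)
  then show ?thesis
    using q ps unfolding move_def by force
qed

lemma move_add_right: "move c B B' \<Longrightarrow> move c (A + B) (A + B')"
  using move_add_left by (metis add.commute)

lemma move_addE:
  assumes "move c (A + B) Y"
  obtains A' where "move c A A'" "Y = A' + B"
  | B' where "move c B B'" "Y = A + B'"
proof -
  from assms obtain q ps where q: "q \<in># A + B" and ps: "ps \<in> part_moves c q"
    and Y: "Y = A + B - {#q#} + mset (filter (\<lambda>l. l \<noteq> []) ps)"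
    unfolding move_def by blast
  show thesis
  proof (cases "q \<in># A")
    case True
    then have "Y = (A - {#q#} + mset (filter (\<lambda>l. l \<noteq> []) ps)) + B"
      using Y by (simp add: diff_union_single_conv ac_simps)
    then show thesis
      using that(1) True ps unfolding move_def by blast
  next
    case False
    then have "q \<in># B"
      using q by simp
    moreover from this have "Y = A + (B - {#q#} + mset (filter (\<lambda>l. l \<noteq> []) ps))"
      using Y by (metis diff_union_single_conv union_assoc union_commute)
    ultimately show thesis
      using that(2) ps unfolding move_def by blast
  qed
qed

lemma wins_add_opp_losing:
  assumes "\<not> wins (opp c) Z"
  shows "(wins c X \<longrightarrow> wins c (Z + X)) \<and> (\<not> wins (opp c) X \<longrightarrow> \<not> wins (opp c) (Z + X))"
  using assms
proof (induction "stones Z + stones X" arbitrary: Z X rule: less_induct)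
  case less
  show ?case
  proof (intro conjI impI)
    assume "wins c X"
    then obtain X' where X': "move c X X'" "\<not> wins (opp c) X'"
      using wins_iff_move by blast
    then have "\<not> wins (opp c) (Z + X')"
      using less stones_move[OF X'(1)] by simp
    then show "wins c (Z + X)"
      using move_add_right[OF X'(1)] wins_iff_move by blast
  next
    assume X: "\<not> wins (opp c) X"
    show "\<not> wins (opp c) (Z + X)"
    proof
      assume "wins (opp c) (Z + X)"
      then obtain Y where Y: "move (opp c) (Z + X) Y" "\<not> wins c Y"
        using wins_iff_move[of "opp c"] by auto
      from Y(1) show False
      proof (cases rule: move_addE)
        case (1 Z')
        then obtain Z'' where Z'': "move c Z' Z''" "\<not> wins (opp c) Z''"
          using less.prems wins_iff_move[of "opp c" Z] wins_iff_move[of c Z'] by auto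
        then have "\<not> wins (opp c) (Z'' + X)"
          using less X stones_move[OF 1(1)] stones_move[OF Z''(1)] by simp
        then have "wins c (Z' + X)"
          using move_add_left[OF Z''(1)] wins_iff_move by blast
        then show False
          using Y(2) 1(2) by simp
      next
        case (2 X')
        then have "wins c X'"
          using X wins_iff_move[of "opp c" X] by auto
        then have "wins c (Z + X')"
          using less stones_move[OF 2(1)] by simp
        then show False
          using Y(2) 2(2) by simp
      qed
    qed
  qed
qed

section \<open>Symmetries and the mirror strategy\<close>

lemma neg_part_neg_part [simp]: "neg_part (neg_part p) = p"
  by (simp add: neg_part_def map_idI)

lemma image_mset_neg_part_neg_part [simp]: "image_mset neg_part (image_mset neg_part M) = M"
  by (simp add: image_mset.compositionality comp_def)

lemma rev_neg_part: "rev (neg_part p) = neg_part (rev p)"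
  by (simp add: neg_part_def rev_map)

lemma length_neg_part [simp]: "length (neg_part p) = length p"
  by (simp add: neg_part_def)

lemma neg_part_eq_Nil_iff [simp]: "neg_part p = [] \<longleftrightarrow> p = []"
  by (simp add: neg_part_def)

lemma part_moves_cases:
  assumes "ps \<in> part_moves c q"
  obtains (right) i where "Suc i < length q" "q ! i = c" "q ! Suc i = opp c"
      "ps = [take i q, c # drop (i + 2) q]"
  | (left) i where "0 < i" "i < length q" "q ! i = c" "q ! (i - 1) = opp c"
      "ps = [take (i - 1) q @ [c], drop (i + 1) q]"
  using assms unfolding part_moves_def by blast

lemma part_moves_neg_part:
  assumes "ps \<in> part_moves c q"
  shows "map neg_part ps \<in> part_moves (opp c) (neg_part q)"
  using assms
proof (cases rule: part_moves_cases)
  case (right i)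
  then show ?thesis
    unfolding part_moves_def
    by (intro UnI1 CollectI exI[of _ i]) (simp add: neg_part_def take_map drop_map)
next
  case (left i)
  then show ?thesis
    unfolding part_moves_def
    by (intro UnI2 CollectI exI[of _ i]) (simp add: neg_part_def take_map drop_map)
qed

lemma part_moves_rev:
  assumes "ps \<in> part_moves c q"
  shows "rev (map rev ps) \<in> part_moves c (rev q)"
  using assms
proof (cases rule: part_moves_cases)
  case (right i)
  define j where "j = length q - 1 - i"
  have "0 < j \<and> j < length (rev q) \<and> rev q ! j = c \<and> rev q ! (j - 1) = opp c \<and>
      rev (map rev ps) = [take (j - 1) (rev q) @ [c], drop (j + 1) (rev q)]"
    using right by (auto simp: j_def rev_nth rev_take rev_drop Suc_diff_Suc)
  then show ?thesis
    unfolding part_moves_def by blast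
next
  case (left i)
  define j where "j = length q - 1 - i"
  have "Suc j < length (rev q) \<and> rev q ! j = c \<and> rev q ! Suc j = opp c \<and>
      rev (map rev ps) = [take j (rev q), c # drop (j + 2) (rev q)]"
    using left by (auto simp: j_def rev_nth rev_take rev_drop Suc_diff_Suc Suc_diff_le)
  then show ?thesis
    unfolding part_moves_def by blast
qed

lemma move_image_mset:
  assumes "move c A A'"
    and moves: "\<And>q ps. ps \<in> part_moves c q \<Longrightarrow>
      \<exists>ps'. ps' \<in> part_moves c' (f q) \<and> mset ps' = image_mset f (mset ps)"
    and "\<And>p. f p = [] \<longleftrightarrow> p = []"
  shows "move c' (image_mset f A) (image_mset f A')"
proof -
  from assms(1) obtain q ps where q: "q \<in># A" and ps: "ps \<in> part_moves c q"
    and A': "A' = A - {#q#} + mset (filter (\<lambda>l. l \<noteq> []) ps)"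
    unfolding move_def by blast
  obtain ps' where ps': "ps' \<in> part_moves c' (f q)" "mset ps' = image_mset f (mset ps)"
    using moves[OF ps] by blast
  have "image_mset f A' = image_mset f A - {#f q#} + mset (filter (\<lambda>l. l \<noteq> []) ps')"
    using A' q ps'(2) assms(3) by (simp add: image_mset_Diff filter_mset_image_mset)
  then show ?thesis
    using q ps'(1) unfolding move_def by force
qed

lemma move_neg_part:
  "move c A A' \<Longrightarrow> move (opp c) (image_mset neg_part A) (image_mset neg_part A')"
  by (erule move_image_mset) (use part_moves_neg_part in \<open>force+\<close>)

lemma move_rev_neg_part:
  "move c A A' \<Longrightarrow>
    move (opp c) (image_mset (rev \<circ> neg_part) A) (image_mset (rev \<circ> neg_part) A')"
proof (erule move_image_mset)
  fix q ps assume "ps \<in> part_moves c q"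
  then have "rev (map rev (map neg_part ps)) \<in> part_moves (opp c) ((rev \<circ> neg_part) q)"
    unfolding comp_apply by (intro part_moves_rev part_moves_neg_part)
  then show "\<exists>ps'. ps' \<in> part_moves (opp c) ((rev \<circ> neg_part) q) \<and>
      mset ps' = image_mset (rev \<circ> neg_part) (mset ps)"
    by (metis list.map_comp mset_map mset_rev)
qed simp

text \<open>Tweedledum-Tweedledee: the second player answers every move by its image under \<open>f\<close>.\<close>

lemma mirror_strategy:
  assumes move_f: "\<And>c A A'. move c A A' \<Longrightarrow> move (opp c) (image_mset f A) (image_mset f A')"
    and f_f: "\<And>p. f (f p) = p"
  shows "\<not> wins c (A + image_mset f A)"
proof (induction "stones A" arbitrary: A c rule: less_induct)
  case less
  have ff: "image_mset f (image_mset f M) = M" for M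
    by (simp add: image_mset.compositionality comp_def f_f)
  have reply: "wins (opp c) Y"
    if "move (opp c) Y (A' + image_mset f A')" "stones A' < stones A" for Y A'
    using that less[of A' c] wins_iff_move[of "opp c" Y] by auto
  show ?case
  proof
    assume "wins c (A + image_mset f A)"
    then obtain Y where Y: "move c (A + image_mset f A) Y" "\<not> wins (opp c) Y"
      using wins_iff_move by blast
    from Y(1) show False
    proof (cases rule: move_addE)
      case (1 A')
      then show False
        using reply[of Y A'] Y(2) move_add_right[OF move_f[OF 1(1)]] stones_move[OF 1(1)]
        by simp
    next
      case (2 B')
      then have A: "move (opp c) A (image_mset f B')"
        using move_f[OF 2(1)] ff by simp
      have "move (opp c) Y (image_mset f B' + image_mset f (image_mset f B'))"
        unfolding ff using move_add_left[OF A, of B'] 2(2) by simp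
      then show False
        using reply Y(2) stones_move[OF A] by simp
    qed
  qed
qed

lemma wins_neg_part: "wins c (image_mset neg_part G) \<longleftrightarrow> wins (opp c) G"
proof (induction "stones G" arbitrary: G c rule: less_induct)
  case less
  have moves: "move c (image_mset neg_part G) Y \<longleftrightarrow> move (opp c) G (image_mset neg_part Y)" for Y
    using move_neg_part[of c "image_mset neg_part G" Y]
      move_neg_part[of "opp c" G "image_mset neg_part Y"]
    by auto
  have "wins c (image_mset neg_part G) \<longleftrightarrow>
      (\<exists>G'. move (opp c) G G' \<and> \<not> wins (opp c) (image_mset neg_part G'))"
    unfolding wins_iff_move[of c] moves by (metis image_mset_neg_part_neg_part)
  also have "\<dots> \<longleftrightarrow> (\<exists>G'. move (opp c) G G' \<and> \<not> wins c G')"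
    using less stones_move by (metis lessI opp_opp)
  finally show ?case
    using wins_iff_move[of "opp c" G] by simp
qed

text \<open>Stronger than \<^const>\<open>equiv_game\<close>: the test positions \<open>X\<close> need not be valid,
  which spares side conditions when positions are added.\<close>

definition game_equiv :: "game \<Rightarrow> game \<Rightarrow> bool" where
  "game_equiv G H \<longleftrightarrow> (\<forall>X c. wins c (G + X) \<longleftrightarrow> wins c (H + X))"

definition second_player_win :: "game \<Rightarrow> bool" where
  "second_player_win G \<longleftrightarrow> (\<forall>c. \<not> wins c G)"

lemma game_equiv_imp_equiv_game: "game_equiv G H \<Longrightarrow> equiv_game G H"
  by (simp add: game_equiv_def equiv_game_def outcome_def)

lemma game_equiv_wins: "game_equiv G H \<Longrightarrow> wins c G \<longleftrightarrow> wins c H"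
  unfolding game_equiv_def by (metis add_0_right)

lemma game_equiv_refl: "game_equiv G G"
  by (simp add: game_equiv_def)

lemma game_equiv_sym: "game_equiv G H \<Longrightarrow> game_equiv H G"
  by (simp add: game_equiv_def)

lemma game_equiv_trans: "game_equiv G H \<Longrightarrow> game_equiv H K \<Longrightarrow> game_equiv G K"
  by (simp add: game_equiv_def)

lemma game_equiv_add: "game_equiv G H \<Longrightarrow> game_equiv (G + K) (H + K)"
  unfolding game_equiv_def by (metis add.assoc)

lemma game_equiv_add_both:
  "game_equiv G H \<Longrightarrow> game_equiv G' H' \<Longrightarrow> game_equiv (G + G') (H + H')"
  by (metis game_equiv_add game_equiv_trans add.commute)

lemma second_player_win_add_neg_part: "second_player_win (G + image_mset neg_part G)"
  unfolding second_player_win_def using mirror_strategy[OF move_neg_part] by simp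

lemma second_player_win_add_rev_neg_part:
  "second_player_win (G + image_mset (rev \<circ> neg_part) G)"
  unfolding second_player_win_def using mirror_strategy[OF move_rev_neg_part]
  by (simp add: rev_neg_part)

lemma wins_add_second_player_win:
  assumes "second_player_win Z"
  shows "wins c (Z + X) \<longleftrightarrow> wins c X"
  using assms wins_add_opp_losing[of c Z X] wins_add_opp_losing[of "opp c" Z X]
  unfolding second_player_win_def by auto

lemma game_equiv_if_second_player_win:
  assumes "second_player_win (G + image_mset neg_part H)"
  shows "game_equiv G H"
  unfolding game_equiv_def
proof (intro allI)
  fix X c
  have "wins c (G + X) \<longleftrightarrow> wins c ((H + image_mset neg_part H) + (G + X))"
    using wins_add_second_player_win[OF second_player_win_add_neg_part] by simp
  also have "\<dots> \<longleftrightarrow> wins c ((G + image_mset neg_part H) + (H + X))"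
    by (simp add: ac_simps)
  also have "\<dots> \<longleftrightarrow> wins c (H + X)"
    using wins_add_second_player_win[OF assms] by simp
  finally show "wins c (G + X) \<longleftrightarrow> wins c (H + X)" .
qed

lemma game_equiv_neg_part:
  assumes "game_equiv G H"
  shows "game_equiv (image_mset neg_part G) (image_mset neg_part H)"
  unfolding game_equiv_def
proof (intro allI)
  fix X c
  have neg: "image_mset neg_part (K + image_mset neg_part X) = image_mset neg_part K + X" for K
    by simp
  show "wins c (image_mset neg_part G + X) \<longleftrightarrow> wins c (image_mset neg_part H + X)"
    using assms wins_neg_part[of c "_ + image_mset neg_part X"]
    unfolding game_equiv_def neg by metis
qed

lemma game_equiv_rev: "game_equiv {#rev p#} {#p#}"
  using second_player_win_add_rev_neg_part[of "{#neg_part p#}"]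
  by (intro game_equiv_if_second_player_win) (simp add: rev_neg_part add_mset_commute)

lemma game_equiv_matches: "matches pat q \<Longrightarrow> game_equiv {#q#} {#pat#}"
  unfolding matches_def using game_equiv_rev game_equiv_refl by auto

lemma game_equiv_opposite_pair: "matches (neg_part p) q \<Longrightarrow> game_equiv {#p, q#} {#}"
  unfolding matches_def
  using second_player_win_add_neg_part[of "{#p#}"] second_player_win_add_rev_neg_part[of "{#p#}"]
  by (intro game_equiv_if_second_player_win) (auto simp: rev_neg_part add_mset_commute)

lemma game_equiv_trivial: "\<not> nontrivial q \<Longrightarrow> game_equiv {#q#} {#}"
proof (rule game_equiv_if_second_player_win)
  assume "\<not> nontrivial q"
  then have "part_moves c q = {}" for c
    unfolding nontrivial_def part_moves_def by (cases c) auto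
  then show "second_player_win ({#q#} + image_mset neg_part {#})"
    unfolding second_player_win_def by (subst wins_iff_move) (simp add: move_def)
qed

section \<open>Exhaustive search\<close>

lemma nontrivial_code [code]:
  "nontrivial (a # b # r) \<longleftrightarrow> a \<noteq> b \<or> nontrivial (b # r)"
  "nontrivial [a] \<longleftrightarrow> False"
  "nontrivial [] \<longleftrightarrow> False"
proof -
  have "(\<exists>i. P i) \<longleftrightarrow> P 0 \<or> (\<exists>j. P (Suc j))" for P :: "nat \<Rightarrow> bool"
    by (metis not0_implies_Suc)
  from this[of "\<lambda>i. Suc i < length (a # b # r) \<and> (a # b # r) ! i \<noteq> (a # b # r) ! Suc i"]
  show "nontrivial (a # b # r) \<longleftrightarrow> a \<noteq> b \<or> nontrivial (b # r)"
    unfolding nontrivial_def by simp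
qed (simp_all add: nontrivial_def)

definition part_move_list :: "stone \<Rightarrow> part \<Rightarrow> part list list" where
  "part_move_list c q =
     [[take i q, c # drop (i + 2) q]. i \<leftarrow> [0..<length q - 1], q ! i = c \<and> q ! Suc i = opp c] @
     [[take (i - 1) q @ [c], drop (i + 1) q]. i \<leftarrow> [1..<length q], q ! i = c \<and> q ! (i - 1) = opp c]"

lemma set_part_move_list: "set (part_move_list c q) = part_moves c q"
proof -
  have comp: "set [f i. i \<leftarrow> [m..<n], P i] = {f i |i. m \<le> i \<and> i < n \<and> P i}"
    for f :: "nat \<Rightarrow> part list" and m n P
    by auto
  show ?thesis
    unfolding part_move_list_def part_moves_def set_append comp
    by (simp add: less_diff_conv Suc_le_eq conj_commute)
qed

fun cancel_opposites :: "part list \<Rightarrow> part list \<Rightarrow> part list" where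
  "cancel_opposites A [] = A"
| "cancel_opposites A (p # L) =
    (if neg_part p \<in> set A then cancel_opposites (remove1 (neg_part p) A) L
     else if rev (neg_part p) \<in> set A then cancel_opposites (remove1 (rev (neg_part p)) A) L
     else cancel_opposites (p # A) L)"

lemma game_equiv_cancel_opposites:
  "game_equiv (mset (cancel_opposites A L)) (mset A + mset L)"
proof (induction A L rule: cancel_opposites.induct)
  case (1 A)
  then show ?case
    by (simp add: game_equiv_refl)
next
  case (2 A p L)
  have cancel: "game_equiv (mset (remove1 q A) + mset L) (mset A + mset (p # L))"
    if "q \<in> set A" "matches (neg_part p) q" for q
  proof -
    have "mset A + mset (p # L) = mset (remove1 q A) + mset L + {#p, q#}"
      using that(1) by (simp add: mset_remove1 add_mset_commute)
    then show ?thesis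
      using game_equiv_add_both[OF game_equiv_refl game_equiv_opposite_pair[OF that(2)]]
      by (metis add_0_right game_equiv_sym)
  qed
  show ?case
    using 2 cancel[of "neg_part p"] cancel[of "rev (neg_part p)"]
    by (auto simp: matches_def intro: game_equiv_trans)
qed

lemma length_concat_remove1: "length (concat (remove1 x A)) \<le> length (concat A)"
  by (induction A) auto

lemma length_concat_cancel_opposites:
  "length (concat (cancel_opposites A L)) \<le> length (concat A) + length (concat L)"
proof (induction A L rule: cancel_opposites.induct)
  case (2 A p L)
  then show ?case
    using length_concat_remove1[of "neg_part p" A] length_concat_remove1[of "rev (neg_part p)" A]
    by auto
qed simp

lemma game_equiv_filter_nontrivial: "game_equiv (mset (filter nontrivial L)) (mset L)"
proof (induction L)
  case Nil
  then show ?case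
    by (simp add: game_equiv_refl)
next
  case (Cons p L)
  show ?case
  proof (cases "nontrivial p")
    case True
    then show ?thesis
      using game_equiv_add_both[OF game_equiv_refl Cons, of "{#p#}"] by simp
  next
    case False
    then show ?thesis
      using game_equiv_add_both[OF game_equiv_sym[OF game_equiv_trivial] Cons] by simp
  qed
qed

definition add_simplified :: "part list \<Rightarrow> part list \<Rightarrow> part list" where
  "add_simplified N A = cancel_opposites A (filter nontrivial N)"

lemma game_equiv_add_simplified: "game_equiv (mset (add_simplified N A)) (mset A + mset N)"
  unfolding add_simplified_def
  using game_equiv_cancel_opposites
    game_equiv_add_both[OF game_equiv_refl game_equiv_filter_nontrivial]
  by (rule game_equiv_trans)

text \<open>Successors with few stones come first, since that is where refutations are usually found.\<close>

definition successors :: "stone \<Rightarrow> part list \<Rightarrow> part list list" where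
  "successors c L = sort_key (\<lambda>L'. length (concat L'))
     [add_simplified ps (remove1 q L). q \<leftarrow> L, ps \<leftarrow> part_move_list c q]"

lemma set_successors:
  "set (successors c L) = {add_simplified ps (remove1 q L) |q ps. q \<in> set L \<and> ps \<in> part_moves c q}"
  by (auto simp: successors_def set_part_move_list[symmetric])

lemma length_concat_successors:
  assumes "L' \<in> set (successors c L)"
  shows "length (concat L') < length (concat L)"
proof -
  obtain q ps where q: "q \<in> set L" and ps: "ps \<in> part_moves c q"
    and L': "L' = add_simplified ps (remove1 q L)"
    using assms set_successors by blast
  have "length (concat (filter nontrivial ps)) < length q"
    using ps unfolding part_moves_def by (auto simp: length_concat)
  moreover have "length (concat L) = length q + length (concat (remove1 q L))"
    using q by (induction L) auto
  ultimately show ?thesis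
    using L' length_concat_cancel_opposites unfolding add_simplified_def
    by (metis add.commute add_less_mono1 order_le_less_trans)
qed

lemma wins_iff_successors:
  "wins c (mset L) \<longleftrightarrow> (\<exists>L' \<in> set (successors c L). \<not> wins (opp c) (mset L'))"
proof -
  have moves: "move c (mset L) Y \<longleftrightarrow> (\<exists>q \<in> set L. \<exists>ps \<in> part_moves c q.
      Y = mset (remove1 q L) + mset (filter (\<lambda>l. l \<noteq> []) ps))" for Y
    unfolding move_def by (simp add: mset_remove1)
  have simplified: "wins (opp c) (mset (remove1 q L) + mset (filter (\<lambda>l. l \<noteq> []) ps)) \<longleftrightarrow>
      wins (opp c) (mset (add_simplified ps (remove1 q L)))" for q ps
  proof -
    have "filter nontrivial (filter (\<lambda>l. l \<noteq> []) ps) = filter nontrivial ps"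
      by (induction ps) (auto simp: nontrivial_code(3))
    then have "add_simplified ps (remove1 q L) =
        add_simplified (filter (\<lambda>l. l \<noteq> []) ps) (remove1 q L)"
      by (simp add: add_simplified_def)
    with game_equiv_wins[OF game_equiv_add_simplified] show ?thesis
      by (simp only:)
  qed
  show ?thesis
    unfolding wins_iff_move[of c] set_successors moves using simplified by blast
qed

function wins_search :: "stone \<Rightarrow> part list \<Rightarrow> bool"
  and loses_search :: "stone \<Rightarrow> part list \<Rightarrow> bool" where
  "wins_search c L = list_ex (loses_search (opp c)) (successors c L)"
| "loses_search c L = list_all (wins_search (opp c)) (successors c L)"
  by pat_completeness auto
termination
  by (relation "measure (\<lambda>x. length (concat (snd (case_sum id id x))))")
    (auto dest: length_concat_successors)

declare wins_search.simps [simp del] loses_search.simps [simp del]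

lemma search_correct:
  "wins_search c L \<longleftrightarrow> wins c (mset L)" "loses_search c L \<longleftrightarrow> \<not> wins c (mset L)"
proof (induction c L and c L rule: wins_search_loses_search.induct)
  case (1 c L)
  then show ?case
    unfolding wins_search.simps[of c L] wins_iff_successors[of c L] list_ex_iff by blast
next
  case (2 c L)
  then show ?case
    unfolding loses_search.simps[of c L] wins_iff_successors[of c L] list_all_iff by blast
qed

definition sound_rules :: "(part \<times> part list) list \<Rightarrow> bool" where
  "sound_rules R \<longleftrightarrow> (\<forall>(pat, rs) \<in> set R. game_equiv {#pat#} (mset rs))"

definition shortening :: "(part \<times> part list) list \<Rightarrow> bool" where
  "shortening R \<longleftrightarrow> (\<forall>(pat, rs) \<in> set R. \<forall>r \<in> set rs. length r < length pat)"

fun equiv_by_search :: "part \<times> part list \<Rightarrow> bool" where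
  "equiv_by_search (pat, rs) \<longleftrightarrow>
     loses_search Bk (pat # map neg_part rs) \<and> loses_search Wh (pat # map neg_part rs)"

lemma sound_rules_by_search: "list_all equiv_by_search R \<Longrightarrow> sound_rules R"
  unfolding sound_rules_def list_all_iff
proof (intro ballI, clarify)
  fix pat rs
  assume "\<forall>x \<in> set R. equiv_by_search x" and "(pat, rs) \<in> set R"
  then have "loses_search c (pat # map neg_part rs)" for c
    by (cases c) auto
  then have "\<not> wins c (mset (pat # map neg_part rs))" for c
    using search_correct(2) by blast
  then show "game_equiv {#pat#} (mset rs)"
    by (intro game_equiv_if_second_player_win) (simp add: second_player_win_def)
qed

lemma sound_rules_neg_rule: "sound_rules R \<Longrightarrow> sound_rules (neg_rule R)"
  unfolding sound_rules_def neg_rule_def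
  using game_equiv_neg_part by fastforce

lemma shortening_neg_rule: "shortening R \<Longrightarrow> shortening (neg_rule R)"
  unfolding shortening_def neg_rule_def by fastforce

lemma sound_rho_alpha: "sound_rules rho_alpha"
  by (rule sound_rules_by_search) code_simp

lemma sound_rho_gamma: "sound_rules rho_gamma"
  by (rule sound_rules_by_search) code_simp

lemma sound_rho_delta: "sound_rules rho_delta"
  by (rule sound_rules_by_search) code_simp

lemma sound_rho_eps: "sound_rules rho_eps"
  by (rule sound_rules_by_search) code_simp

lemma sound_rho_zeta: "sound_rules rho_zeta"
  by (rule sound_rules_by_search) code_simp

lemma sound_rho_eta: "sound_rules rho_eta"
  by (rule sound_rules_by_search) code_simp

lemma shortening_rho:
  "shortening rho_alpha" "shortening rho_gamma" "shortening rho_delta"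
  "shortening rho_eps" "shortening rho_zeta" "shortening rho_eta"
  by (simp_all add: shortening_def rho_alpha_def rho_gamma_def rho_delta_def rho_eps_def
      rho_zeta_def rho_eta_def w_def)

lemma asf_rules_cases:
  assumes "r \<in> set asf_rules"
  shows "r = Beta \<or> (\<exists>R. r = Simple R \<and> sound_rules R \<and> shortening R)"
  using assms sound_rho_alpha sound_rho_gamma sound_rho_delta sound_rho_eps sound_rho_zeta
    sound_rho_eta shortening_rho sound_rules_neg_rule shortening_neg_rule
  unfolding asf_rules_def by auto

lemma rule_step_Simple:
  assumes "sound_rules R" "shortening R" "rule_step (Simple R) G G'"
  shows "game_equiv G G'" "(image_mset length G', image_mset length G) \<in> mult less_than"
proof -
  from assms(3) obtain pat rs q where rule: "(pat, rs) \<in> set R" and q: "q \<in># G"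
    and "matches pat q" and G': "G' = G - {#q#} + mset rs"
    by auto
  have G: "G = G - {#q#} + {#q#}"
    using q by simp
  have "game_equiv {#q#} (mset rs)"
    using game_equiv_matches[OF \<open>matches pat q\<close>] assms(1) rule
    unfolding sound_rules_def by (auto intro: game_equiv_trans)
  then show "game_equiv G G'"
    using game_equiv_add_both[OF game_equiv_refl, of "{#q#}" "mset rs" "G - {#q#}"] G G'
    by simp
  have "length r < length q" if "r \<in> set rs" for r
    using assms(2) rule that \<open>matches pat q\<close> unfolding shortening_def matches_def by auto
  then have "(image_mset length (G - {#q#}) + image_mset length (mset rs),
      image_mset length (G - {#q#}) + {#length q#}) \<in> mult less_than"
    by (intro one_step_implies_mult) auto
  then show "(image_mset length G', image_mset length G) \<in> mult less_than"
    using G G' by (metis image_mset_add_mset image_mset_single image_mset_union)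
qed

lemma rule_step_Beta:
  assumes "rule_step Beta G G'"
  shows "game_equiv G G'" "(image_mset length G', image_mset length G) \<in> mult less_than"
proof -
  from assms obtain q1 q2 where sub: "{#q1, q2#} \<subseteq># G"
    and "matches (neg_part q1) q2" and G': "G' = G - {#q1, q2#}"
    by auto
  have G: "G = G' + {#q1, q2#}"
    using sub G' subset_mset.diff_add by metis
  show "game_equiv G G'"
    using game_equiv_add_both[OF game_equiv_refl[of G']
        game_equiv_opposite_pair[OF \<open>matches (neg_part q1) q2\<close>]] G
    by simp
  have "(image_mset length G' + {#}, image_mset length G' + {#length q1, length q2#})
      \<in> mult less_than"
    by (intro one_step_implies_mult) auto
  then show "(image_mset length G', image_mset length G) \<in> mult less_than"
    using G by simp
qed

lemma asf_step_rule_step: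
  assumes "asf_step G G'"
  obtains r where "r \<in> set asf_rules" "rule_step r G G'"
  using assms unfolding asf_step_def by (metis nth_mem)

lemma asf_step_game_equiv: "asf_step G G' \<Longrightarrow> game_equiv G G'"
  by (metis asf_step_rule_step asf_rules_cases rule_step_Simple(1) rule_step_Beta(1))

lemma asf_step_mult_lengths:
  "asf_step G G' \<Longrightarrow> (image_mset length G', image_mset length G) \<in> mult less_than"
  by (metis asf_step_rule_step asf_rules_cases rule_step_Simple(2) rule_step_Beta(2))

lemma wf_asf_step: "wf {(G', G). asf_step G G'}"
proof (rule wf_subset)
  show "wf (inv_image (mult less_than) (image_mset length))"
    by (intro wf_inv_image wf_mult wf_less_than)
  show "{(G', G). asf_step G G'} \<subseteq> inv_image (mult less_than) (image_mset length)"
    using asf_step_mult_lengths by auto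
qed

theorem theorem2:
  fixes G :: game
  assumes "alc_game G"
  shows "(\<nexists>f. f 0 = G \<and> (\<forall>n. asf_step (f n) (f (Suc n))))
         \<and> (\<forall>H. asf_step\<^sup>*\<^sup>* G H \<and> (\<nexists>H'. asf_step H H') \<longrightarrow> equiv_game G H)"
proof (intro conjI allI impI)
  show "\<nexists>f. f 0 = G \<and> (\<forall>n. asf_step (f n) (f (Suc n)))"
    using wf_asf_step unfolding wf_iff_no_infinite_down_chain by blast
next
  fix H
  assume "asf_step\<^sup>*\<^sup>* G H \<and> (\<nexists>H'. asf_step H H')"
  then have "asf_step\<^sup>*\<^sup>* G H"
    by blast
  then have "game_equiv G H"
    by (induction rule: rtranclp_induct)
      (auto intro: game_equiv_refl game_equiv_trans asf_step_game_equiv)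
  then show "equiv_game G H"
    by (rule game_equiv_imp_equiv_game)
qed

end
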